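(* Let $n\ge 2$, $V_n=[n]$, and let $K_n=(V_n,E_n)$ be the complete graph. Let $1\le k\le\lfloor n/2\rfloor$. Then there exists a family $T_k$ of $k$-element subsets of $V_n$ with \[|T_k|\le (1+k\ln(n))\,2^{-k}\binom{n}{k}\] such that for every matching $M\subset E_n$ with $|M|=k$ there exists $X\in T_k$ with $\delta(X)\cap M=M$, i.e. $M\subset E(X,V_n\setminus X)$ (every edge of $M$ has exactly one endpoint in $X$).
   Context: For $X\subset V_n$, $\delta(X)$ denotes the set of edges with exactly one endpoint in $X$, and $E(X,V_n\setminus X)$ the set of edges joining $X$ to its complement. A matching is a set of pairwise disjoint edges. *)

theory Defs
  imports Complex_Main
begin

definition V :: "nat \<Rightarrow> nat set" where
  "V n = {1..n}"

definition E :: "nat \<Rightarrow> nat set set" where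
  "E n = {e. e \<subseteq> V n \<and> card e = 2}"

definition is_matching :: "nat set set \<Rightarrow> bool" where
  "is_matching M \<longleftrightarrow> (\<forall>e\<in>M. \<forall>f\<in>M. e \<noteq> f \<longrightarrow> e \<inter> f = {})"

definition delta :: "nat \<Rightarrow> nat set \<Rightarrow> nat set set" where
  "delta n X = {e \<in> E n. card (e \<inter> X) = 1}"

end

(* Let the k-matchings of K_n be covered by the k-subsets X of V_n, where X covers M when
   M \<subseteq> delta n X. Choosing one endpoint of every edge shows that each matching is covered by at
   least 2^k of the (n choose k) sets, and a k-set X covers at most n^k matchings, because such a
   matching is determined by the partner of each vertex of X. The greedy algorithm therefore
   yields a cover of size at most (n choose k) / 2^k * (1 + ln (n^k)), the Lovasz-Stein bound for
   set covers. *)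

theory Submission
  imports Defs "HOL-Library.FuncSet"
begin

lemma sum_card_filter_swap:
  assumes "finite A" "finite B"
  shows "(\<Sum>a\<in>A. card {b\<in>B. R a b}) = (\<Sum>b\<in>B. card {a\<in>A. R a b})"
  by (rule sum_multicount_gen) (use assms in auto)

(* When every greedy step covers at least the fraction r of the u points still uncovered,
   (1 + ln (r * u)) / r steps suffice, and u steps suffice trivially; the two bounds are glued
   where r * u = 1, which makes greedy_bound monotone and stable under one greedy step. *)
definition greedy_bound :: "real \<Rightarrow> real \<Rightarrow> real" where
  "greedy_bound r u = (if r * u \<le> 1 then u else (1 + ln (r * u)) / r)"

lemma greedy_bound_le:
  assumes "r > 0"
  shows "greedy_bound r u \<le> u"
proof (cases "r * u \<le> 1")
  case False
  then have "1 + ln (r * u) \<le> r * u"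
    using ln_le_minus_one[of "r * u"] by simp
  then show ?thesis
    using False assms by (simp add: greedy_bound_def divide_le_eq mult.commute)
qed (simp add: greedy_bound_def)

lemma greedy_bound_mono:
  assumes "r > 0" "a \<le> b"
  shows "greedy_bound r a \<le> greedy_bound r b"
proof -
  have rab: "r * a \<le> r * b"
    using assms by simp
  consider "r * b \<le> 1" | "r * a \<le> 1" "1 < r * b" | "1 < r * a"
    by linarith
  then show ?thesis
  proof cases
    case 1
    then have "r * a \<le> 1"
      using rab by linarith
    then show ?thesis
      using 1 assms by (simp add: greedy_bound_def)
  next
    case 2
    then have "1 / r \<le> (1 + ln (r * b)) / r"
      using assms by (simp add: divide_right_mono)
    moreover have "a \<le> 1 / r"
      using 2 assms by (simp add: le_divide_eq mult.commute)
    ultimately show ?thesis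
      using 2 by (simp add: greedy_bound_def)
  next
    case 3
    then have "ln (r * a) \<le> ln (r * b)" "1 < r * b"
      using rab by simp_all
    then show ?thesis
      using 3 assms by (simp add: greedy_bound_def divide_right_mono)
  qed
qed

lemma greedy_bound_shrink:
  assumes r: "r > 0" and ru: "1 < r * u"
  shows "1 + greedy_bound r ((1 - r) * u) \<le> greedy_bound r u"
proof -
  define y where "y = r * u"
  define w where "w = (1 - r) * u"
  have y: "1 < y" and rw: "r * w = (1 - r) * y"
    using ru by (simp_all add: y_def w_def)
  have u: "greedy_bound r u = (1 + ln y) / r"
    using ru by (simp add: greedy_bound_def y_def)
  show ?thesis
  proof (cases "r * w \<le> 1")
    case True
    then have "1 - r \<le> 1 / y"
      using rw y by (simp add: le_divide_eq)
    then have "(1 - r) * (y - 1) \<le> (y - 1) / y"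
      using y by (metis diff_gt_0_iff_gt less_le mult_right_mono times_divide_eq_left mult_1)
    also have "\<dots> \<le> ln y"
      using ln_add1_ge[of "y - 1"] y by simp
    finally have "r * (1 + w) \<le> 1 + ln y"
      using rw by (simp add: algebra_simps)
    then show ?thesis
      using True u r by (simp add: greedy_bound_def w_def le_divide_eq mult.commute)
  next
    case False
    then have "r < 1"
      using rw y by (smt (verit) mult_nonpos_nonneg)
    then have "ln (r * w) \<le> ln y - r"
      using rw y r ln_one_minus_pos_upper_bound[of r] by (simp add: ln_mult)
    then have "(1 + ln (r * w)) / r \<le> (1 + ln y - r) / r"
      using r by (simp add: divide_right_mono)
    also have "\<dots> = (1 + ln y) / r - 1"
      using r by (simp add: diff_divide_distrib)
    finally show ?thesis
      using False u by (simp add: greedy_bound_def w_def)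
  qed
qed

lemma greedy_bound_step:
  assumes "r > 0" "v \<le> u - 1" "v \<le> (1 - r) * u"
  shows "1 + greedy_bound r v \<le> greedy_bound r u"
proof (cases "r * u \<le> 1")
  case True
  then show ?thesis
    using greedy_bound_le[of r v] assms by (simp add: greedy_bound_def)
next
  case False
  then show ?thesis
    using greedy_bound_mono[of r v "(1 - r) * u"] greedy_bound_shrink[of r u] assms by simp
qed

lemma ex_cover_ge_average:
  fixes cov :: "'a \<Rightarrow> 'b \<Rightarrow> bool" and d :: real
  assumes "finite C" "C \<noteq> {}" "finite U"
    and deg: "\<And>x. x \<in> U \<Longrightarrow> d \<le> card {X\<in>C. cov X x}"
  shows "\<exists>X\<in>C. d * card U \<le> real (card C) * card {x\<in>U. cov X x}"
proof -
  define f where "f X = card {x\<in>U. cov X x}" for X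
  have "Max (f ` C) \<in> f ` C"
    using assms(1,2) by (intro Max_in) auto
  then obtain X where "X \<in> C" "f X = Max (f ` C)"
    by auto
  then have X: "X \<in> C" "\<And>Y. Y \<in> C \<Longrightarrow> f Y \<le> f X"
    using assms(1) by auto
  have "d * card U = (\<Sum>x\<in>U. d)"
    by simp
  also have "\<dots> \<le> (\<Sum>x\<in>U. real (card {X\<in>C. cov X x}))"
    using deg by (intro sum_mono) auto
  also have "\<dots> = (\<Sum>Y\<in>C. real (f Y))"
    using sum_card_filter_swap[OF assms(3,1), of "\<lambda>x X. cov X x"] by (simp add: f_def flip: of_nat_sum)
  also have "\<dots> \<le> (\<Sum>Y\<in>C. real (f X))"
    using X by (intro sum_mono) auto
  finally show ?thesis
    using X(1) by (intro bexI[of _ X]) (simp_all add: f_def mult.commute)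
qed

lemma greedy_set_cover:
  fixes cov :: "'a \<Rightarrow> 'b \<Rightarrow> bool" and d :: real
  assumes "finite C" "finite U" "d > 0"
    and "\<And>x. x \<in> U \<Longrightarrow> d \<le> card {X\<in>C. cov X x}"
  shows "\<exists>T\<subseteq>C. card T \<le> greedy_bound (d / card C) (card U) \<and> (\<forall>x\<in>U. \<exists>X\<in>T. cov X x)"
  using assms(2,4)
proof (induction "card U" arbitrary: U rule: less_induct)
  case (less U)
  define r where "r = d / card C"
  show ?case
  proof (cases "U = {}")
    case True
    then show ?thesis
      by (intro exI[of _ "{}"]) (simp add: greedy_bound_def)
  next
    case False
    then obtain x where "x \<in> U"
      by blast
    then have "{X\<in>C. cov X x} \<noteq> {}"
      using less.prems(2)[of x] \<open>d > 0\<close> by (metis card.empty of_nat_0 not_le)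
    then have C: "C \<noteq> {}" "card C > 0"
      using \<open>finite C\<close> card_gt_0_iff by auto
    then have r: "r > 0"
      using \<open>d > 0\<close> by (simp add: r_def)
    obtain X where X: "X \<in> C" "d * card U \<le> real (card C) * card {x\<in>U. cov X x}"
      using ex_cover_ge_average[of C U d cov] \<open>finite C\<close> C(1) less.prems by blast
    define U' where "U' = {x\<in>U. \<not> cov X x}"
    have "U = {x\<in>U. cov X x} \<union> U'" "{x\<in>U. cov X x} \<inter> U' = {}"
      by (auto simp: U'_def)
    then have card_U: "card U = card {x\<in>U. cov X x} + card U'"
      using less.prems(1) by (metis card_Un_disjoint finite_Un)
    have gain: "r * card U \<le> card {x\<in>U. cov X x}"
      using X(2) C(2) by (simp add: r_def divide_le_eq mult.commute)
    moreover have "0 < r * card U"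
      using r False less.prems(1) by (simp add: card_gt_0_iff)
    ultimately have "card U' < card U"
      using card_U by linarith
    moreover have "finite U'" "\<And>x. x \<in> U' \<Longrightarrow> d \<le> card {X\<in>C. cov X x}"
      using less.prems by (simp_all add: U'_def)
    ultimately obtain T' where T': "T' \<subseteq> C" "card T' \<le> greedy_bound r (card U')"
        "\<forall>x\<in>U'. \<exists>X\<in>T'. cov X x"
      unfolding r_def by (metis less.hyps)
    have "card (insert X T') \<le> 1 + real (card T')"
      using finite_subset[OF T'(1) \<open>finite C\<close>] by (simp add: card_insert_if)
    also have "\<dots> \<le> 1 + greedy_bound r (card U')"
      using T'(2) by simp
    also have "\<dots> \<le> greedy_bound r (card U)"
      using gain \<open>card U' < card U\<close> card_U r
      by (intro greedy_bound_step) (simp_all add: left_diff_distrib)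
    finally show ?thesis
      using T' X(1) unfolding r_def U'_def by (intro exI[of _ "insert X T'"]) auto
  qed
qed

lemma greedy_bound_le_ln:
  assumes "r > 0" "r * u \<le> s" "1 \<le> s"
  shows "greedy_bound r u \<le> (1 + ln s) / r"
proof (cases "r * u \<le> 1")
  case True
  then have "u \<le> 1 / r"
    using assms(1) by (simp add: le_divide_eq mult.commute)
  also have "\<dots> \<le> (1 + ln s) / r"
    using assms by (simp add: divide_right_mono)
  finally show ?thesis
    using True by (simp add: greedy_bound_def)
next
  case False
  then have "ln (r * u) \<le> ln s"
    using assms(2) by simp
  then show ?thesis
    using False assms(1) by (simp add: greedy_bound_def divide_right_mono)
qed

lemma set_cover_ln_bound:
  fixes cov :: "'a \<Rightarrow> 'b \<Rightarrow> bool" and d s :: real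
  assumes "finite C" "finite U" "d > 0" "1 \<le> s"
    and deg: "\<And>x. x \<in> U \<Longrightarrow> d \<le> card {X\<in>C. cov X x}"
    and size: "\<And>X. X \<in> C \<Longrightarrow> card {x\<in>U. cov X x} \<le> s"
  shows "\<exists>T\<subseteq>C. card T \<le> card C / d * (1 + ln s) \<and> (\<forall>x\<in>U. \<exists>X\<in>T. cov X x)"
proof -
  obtain T where T: "T \<subseteq> C" "card T \<le> greedy_bound (d / card C) (card U)"
      "\<forall>x\<in>U. \<exists>X\<in>T. cov X x"
    using greedy_set_cover[of C U d cov] assms(1-3) deg by blast
  have "card T \<le> card C / d * (1 + ln s)"
  proof (cases "C = {}")
    case True
    then show ?thesis
      using T(1) by simp
  next
    case False
    then have C: "card C > 0"
      using assms(1) by (simp add: card_gt_0_iff)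
    have "d * card U = (\<Sum>x\<in>U. d)"
      by simp
    also have "\<dots> \<le> (\<Sum>x\<in>U. real (card {X\<in>C. cov X x}))"
      using deg by (intro sum_mono) auto
    also have "\<dots> = (\<Sum>X\<in>C. real (card {x\<in>U. cov X x}))"
      using sum_card_filter_swap[OF assms(2,1), of "\<lambda>x X. cov X x"] by (simp flip: of_nat_sum)
    also have "\<dots> \<le> (\<Sum>X\<in>C. s)"
      using size by (intro sum_mono) auto
    finally have "d / card C * card U \<le> s"
      using C by (simp add: field_simps)
    then have "greedy_bound (d / card C) (card U) \<le> (1 + ln s) / (d / card C)"
      using C assms(3,4) by (intro greedy_bound_le_ln) auto
    then show ?thesis
      using T(2) by (simp add: mult.commute)
  qed
  then show ?thesis
    using T by blast
qed

lemma finite_V: "finite (V n)" and card_V: "card (V n) = n"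
  by (simp_all add: V_def)

lemma finite_E: "finite (E n)"
  by (rule finite_subset[of _ "Pow (V n)"]) (auto simp: E_def finite_V)

lemma matching_edges_eq:
  assumes "is_matching M" "e \<in> M" "e' \<in> M" "z \<in> e" "z \<in> e'"
  shows "e = e'"
  using assms unfolding is_matching_def by (metis disjoint_iff)

lemma matching_Int_endpoint_choice:
  assumes "is_matching M" "f \<in> (\<Pi>\<^sub>E e\<in>M. e)" "e \<in> M"
  shows "e \<inter> f ` M = {f e}"
proof -
  have f: "\<And>e. e \<in> M \<Longrightarrow> f e \<in> e"
    using assms(2) by (simp add: PiE_iff)
  have "e' = e" if "e' \<in> M" "f e' \<in> e" for e'
    using matching_edges_eq[OF assms(1) that(1) assms(3) f[OF that(1)] that(2)] .
  then show ?thesis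
    using f assms(3) by blast
qed

lemma card_cutting_sets_ge:
  assumes ME: "M \<subseteq> E n" and mat: "is_matching M" and "card M = k"
  shows "2 ^ k \<le> card {X. X \<subseteq> V n \<and> card X = k \<and> M \<subseteq> delta n X}"
proof -
  let ?P = "\<Pi>\<^sub>E e\<in>M. e"
  have "finite M"
    using finite_subset[OF ME finite_E] .
  have f_in: "f e \<in> e" if "f \<in> ?P" "e \<in> M" for f e
    using that by (simp add: PiE_iff)
  have "card ?P = (\<Prod>e\<in>M. card e)"
    using \<open>finite M\<close> by (rule card_PiE)
  also have "\<dots> = 2 ^ k"
    using ME \<open>card M = k\<close> by (simp add: E_def subset_iff)
  finally have card_P: "card ?P = 2 ^ k" .
  have inj: "inj_on (\<lambda>f. f ` M) ?P"
  proof (rule inj_onI)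
    fix f g assume f: "f \<in> ?P" and g: "g \<in> ?P" and "f ` M = g ` M"
    then have "{f e} = {g e}" if "e \<in> M" for e
      using matching_Int_endpoint_choice[OF mat f that] matching_Int_endpoint_choice[OF mat g that]
      by simp
    then show "f = g"
      using f g by (intro PiE_ext) auto
  qed
  have cut: "f ` M \<in> {X. X \<subseteq> V n \<and> card X = k \<and> M \<subseteq> delta n X}" if f: "f \<in> ?P" for f
  proof -
    have "f ` M \<subseteq> V n"
      using f_in[OF f] ME by (auto simp: E_def)
    moreover have "inj_on f M"
    proof (rule inj_onI)
      fix e e' assume "e \<in> M" "e' \<in> M" "f e = f e'"
      moreover have "f e \<in> e'"
        using \<open>f e = f e'\<close> f_in[OF f \<open>e' \<in> M\<close>] by simp
      ultimately show "e = e'"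
        using matching_edges_eq[OF mat _ _ f_in[OF f]] by blast
    qed
    moreover have "M \<subseteq> delta n (f ` M)"
      using matching_Int_endpoint_choice[OF mat f] ME by (auto simp: delta_def)
    ultimately show ?thesis
      using \<open>card M = k\<close> by (simp add: card_image)
  qed
  have "finite {X. X \<subseteq> V n \<and> card X = k \<and> M \<subseteq> delta n X}"
    by (rule finite_subset[of _ "Pow (V n)"]) (auto simp: finite_V)
  from card_inj_on_le[OF inj image_subsetI[OF cut] this] show ?thesis
    unfolding card_P .
qed

lemma cut_matching_eq_image:
  assumes cut: "M \<subseteq> delta n X" and mat: "is_matching M"
    and "card M = card X" "finite X"
  shows "\<exists>g. M = (\<lambda>x. {x, g x}) ` X"
proof -
  define g where "g x = (SOME y. {x, y} \<in> M)" for x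
  have "e \<in> (\<lambda>x. {x, g x}) ` X" if e: "e \<in> M" for e
  proof -
    have "e \<in> E n" "card (e \<inter> X) = 1"
      using cut e by (auto simp: delta_def)
    then obtain x where x: "e \<inter> X = {x}"
      by (metis card_1_singletonE)
    moreover have "x \<in> e"
      using x by blast
    ultimately have "card (e - {x}) = 1"
      using \<open>e \<in> E n\<close> by (simp add: E_def card_Diff_singleton)
    then obtain y where "e - {x} = {y}"
      by (metis card_1_singletonE)
    then have "e = {x, y}"
      using x by blast
    then have "{x, g x} \<in> M"
      unfolding g_def using e by (auto intro: someI)
    then have "{x, g x} = e"
      using matching_edges_eq[OF mat _ e, of "{x, g x}" x] \<open>e = {x, y}\<close> by simp
    then show ?thesis
      using x by blast
  qed
  moreover have "card ((\<lambda>x. {x, g x}) ` X) \<le> card M"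
    using card_image_le[OF \<open>finite X\<close>] \<open>card M = card X\<close> by metis
  ultimately have "M = (\<lambda>x. {x, g x}) ` X"
    using \<open>finite X\<close> by (intro card_seteq) auto
  then show ?thesis
    by blast
qed

lemma card_cut_matchings_le:
  assumes X: "X \<subseteq> V n" "card X = k"
  shows "card {M. M \<subseteq> E n \<and> is_matching M \<and> card M = k \<and> M \<subseteq> delta n X} \<le> n ^ k"
proof -
  let ?F = "\<lambda>g. (\<lambda>x. {x, g x}) ` X"
  have "finite X"
    using finite_subset[OF X(1) finite_V] .
  have "{M. M \<subseteq> E n \<and> is_matching M \<and> card M = k \<and> M \<subseteq> delta n X} \<subseteq> ?F ` (X \<rightarrow>\<^sub>E V n)"
  proof
    fix M assume "M \<in> {M. M \<subseteq> E n \<and> is_matching M \<and> card M = k \<and> M \<subseteq> delta n X}"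
    then have M: "M \<subseteq> E n" "is_matching M" "card M = card X" "M \<subseteq> delta n X"
      using X(2) by auto
    obtain g where g: "M = ?F g"
      using cut_matching_eq_image[OF M(4,2,3) \<open>finite X\<close>] by blast
    have "g x \<in> V n" if "x \<in> X" for x
      using g M(1) that by (auto simp: E_def)
    then have "restrict g X \<in> X \<rightarrow>\<^sub>E V n" and "M = ?F (restrict g X)"
      using g by auto
    then show "M \<in> ?F ` (X \<rightarrow>\<^sub>E V n)"
      by blast
  qed
  then have "card {M. M \<subseteq> E n \<and> is_matching M \<and> card M = k \<and> M \<subseteq> delta n X}
      \<le> card (?F ` (X \<rightarrow>\<^sub>E V n))"
    using \<open>finite X\<close> by (intro card_mono) (simp_all add: finite_PiE finite_V)
  also have "\<dots> \<le> card (X \<rightarrow>\<^sub>E V n)"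
    using \<open>finite X\<close> by (intro card_image_le) (simp add: finite_PiE finite_V)
  also have "\<dots> = n ^ k"
    using \<open>finite X\<close> X(2) by (simp add: card_PiE card_V)
  finally show ?thesis .
qed

theorem corollary1:
  fixes n k :: nat
  assumes "n \<ge> 2" and "1 \<le> k" and "k \<le> n div 2"
  shows "\<exists>T :: nat set set.
           (\<forall>X\<in>T. X \<subseteq> V n \<and> card X = k) \<and>
           real (card T) \<le> (1 + real k * ln (real n)) * 2 powi (- int k) * real (n choose k) \<and>
           (\<forall>M. M \<subseteq> E n \<and> is_matching M \<and> card M = k \<longrightarrow>
                (\<exists>X\<in>T. delta n X \<inter> M = M))"
proof -
  define C where "C = {X. X \<subseteq> V n \<and> card X = k}"
  define U where "U = {M. M \<subseteq> E n \<and> is_matching M \<and> card M = k}"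
  have "finite C" "card C = n choose k"
    unfolding C_def using n_subsets[OF finite_V] by (auto simp: card_V finite_V)
  have "finite U"
    unfolding U_def by (rule finite_subset[of _ "Pow (E n)"]) (auto simp: finite_E)
  have "2 ^ k \<le> real (card {X\<in>C. M \<subseteq> delta n X})" if "M \<in> U" for M
    using card_cutting_sets_ge[of M n k] that unfolding C_def U_def by simp
  moreover have "real (card {M\<in>U. M \<subseteq> delta n X}) \<le> real n ^ k" if "X \<in> C" for X
    using card_cut_matchings_le[of X n k] that unfolding C_def U_def by simp
  moreover have "1 \<le> real n ^ k"
    using assms(1) by simp
  ultimately obtain T where T: "T \<subseteq> C" "card T \<le> card C / 2 ^ k * (1 + ln (real n ^ k))"
      "\<forall>M\<in>U. \<exists>X\<in>T. M \<subseteq> delta n X"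
    using set_cover_ln_bound[of C U "2 ^ k" "real n ^ k" "\<lambda>X M. M \<subseteq> delta n X"]
      \<open>finite C\<close> \<open>finite U\<close> by auto
  have "card C / 2 ^ k * (1 + ln (real n ^ k))
      = (1 + real k * ln (real n)) * 2 powi (- int k) * real (n choose k)"
    using assms(1) \<open>card C = n choose k\<close> by (simp add: ln_realpow power_int_minus field_simps)
  then show ?thesis
    using T unfolding C_def U_def by (intro exI[of _ T]) (auto simp flip: inf.absorb_iff2)
qed

end
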